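(* Let $k\ge2$ and let $G\in\mathbb{N}_0^k$ with $g_1>0$. If $G$ is telescopic, then $\rho_n(G)$ is telescopic for every $n\in\{2,\dots,k\}$.
   Context: $\langle A\rangle$ is the set of $\mathbb{N}_0$-linear combinations. For $G=(g_1,\dots,g_k)$ with $g_1>0$: $G_i=(g_1,\dots,g_i)$, $d_i=\gcd(G_i)$, $c(G)=(c_2,\dots,c_k)$ with $c_j=d_{j-1}/d_j$; $G$ is telescopic if $c_jg_j\in\langle G_{j-1}\rangle$ for $2\le j\le k$. For $k\ge2$ and $2\le n\le k$, $\rho_n(G)=(g_1/c_n,\dots,g_{n-1}/c_n,g_{n+1},\dots,g_k)\in\mathbb{N}_0^{k-1}$ (the entries $g_i/c_n$, $i<n$, are integers since $c_n\mid d_{n-1}$). *)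

theory Defs
  imports Main
begin

text \<open>Sequences G = (g_1,...,g_k) are lists of naturals; g_i = G ! (i - 1).\<close>

definition numsg :: "nat list \<Rightarrow> nat set" where
  "numsg A = {x. \<exists>cs. length cs = length A \<and> x = (\<Sum>i<length A. cs ! i * A ! i)}"

definition pref :: "nat list \<Rightarrow> nat \<Rightarrow> nat list" where
  "pref G i = take i G"

definition dseq :: "nat list \<Rightarrow> nat \<Rightarrow> nat" where
  "dseq G i = Gcd (set (pref G i))"

definition cseq :: "nat list \<Rightarrow> nat \<Rightarrow> nat" where
  "cseq G j = dseq G (j - 1) div dseq G j"

definition telescopic :: "nat list \<Rightarrow> bool" where
  "telescopic G \<longleftrightarrow>
     (\<forall>j. 2 \<le> j \<and> j \<le> length G \<longrightarrow> cseq G j * G ! (j - 1) \<in> numsg (pref G (j - 1)))"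

definition rho :: "nat \<Rightarrow> nat list \<Rightarrow> nat list" where
  "rho n G = map (\<lambda>g. g div cseq G n) (take (n - 1) G) @ drop n G"

end

theory Submission
  imports Defs
begin

text \<open>Write \<open>c = c\<^sub>n\<close>. The first \<open>n - 1\<close> entries of \<open>\<rho>\<^sub>n(G)\<close> are those of \<open>G\<close>
  divided by \<open>c\<close>, so its prefix gcds are \<open>d\<^sub>i / c\<close> for \<open>i < n\<close> and \<open>d\<^sub>i\<^sub>+\<^sub>1\<close> from there on,
  and its \<open>c\<close>-sequence is \<open>(c\<^sub>2, \<dots>, c\<^sub>n\<^sub>-\<^sub>1, c\<^sub>n\<^sub>+\<^sub>1, \<dots>, c\<^sub>k)\<close>. Below \<open>n\<close>, the telescopic
  relations of \<open>G\<close> survive division by \<open>c\<close>, which divides all generators involved.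
  From \<open>n\<close> on, dividing \<open>c g\<^sub>n \<in> \<langle>G\<^sub>n\<^sub>-\<^sub>1\<rangle>\<close> by \<open>c\<close> puts \<open>g\<^sub>n\<close> into the semigroup generated by
  \<open>g\<^sub>1/c, \<dots>, g\<^sub>n\<^sub>-\<^sub>1/c\<close>; hence \<open>\<langle>G\<^sub>j\<rangle>\<close> lies in the semigroup generated by the first \<open>j - 1\<close>
  entries of \<open>\<rho>\<^sub>n(G)\<close>, and the relation of \<open>G\<close> at \<open>j + 1\<close> becomes that of \<open>\<rho>\<^sub>n(G)\<close> at \<open>j\<close>.\<close>

inductive_set add_closure :: "nat set \<Rightarrow> nat set" for S where
  zero: "0 \<in> add_closure S"
| add_gen: "s \<in> S \<Longrightarrow> x \<in> add_closure S \<Longrightarrow> s + x \<in> add_closure S"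

lemma add_closure_add: "x \<in> add_closure S \<Longrightarrow> y \<in> add_closure S \<Longrightarrow> x + y \<in> add_closure S"
  by (induction rule: add_closure.induct) (simp, metis add.assoc add_closure.add_gen)

lemma add_closure_mult: "s \<in> S \<Longrightarrow> m * s \<in> add_closure S"
  by (induction m) (simp_all add: add_closure.zero add_closure.add_gen)

lemma add_closure_base: "s \<in> S \<Longrightarrow> s \<in> add_closure S"
  using add_closure_mult[of s S 1] by simp

lemma add_closure_sum: "(\<And>i. i \<in> I \<Longrightarrow> f i \<in> add_closure S) \<Longrightarrow> sum f I \<in> add_closure S"
  by (induction I rule: infinite_finite_induct) (auto intro: add_closure.zero add_closure_add)

lemma add_closure_subset: "x \<in> add_closure S \<Longrightarrow> S \<subseteq> add_closure T \<Longrightarrow> x \<in> add_closure T"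
  by (induction rule: add_closure.induct) (auto intro: add_closure.zero add_closure_add)

lemma add_closure_mono: "S \<subseteq> T \<Longrightarrow> add_closure S \<subseteq> add_closure T"
  by (auto intro: add_closure_subset add_closure_base)

lemma add_closure_div:
  assumes "x \<in> add_closure S" and "\<And>s. s \<in> S \<Longrightarrow> c dvd s"
  shows "x div c \<in> add_closure ((\<lambda>s. s div c) ` S)"
  using assms(1)
proof (induction rule: add_closure.induct)
  case zero
  then show ?case by (simp add: add_closure.zero)
next
  case (add_gen s x)
  then have "(s + x) div c = s div c + x div c"
    using assms(2) by (simp add: div_plus_div_distrib_dvd_left)
  with add_gen show ?case by (simp add: add_closure.add_gen)
qed

lemma numsg_eq_add_closure: "numsg A = add_closure (set A)"
proof
  show "numsg A \<subseteq> add_closure (set A)"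
    unfolding numsg_def by (auto intro!: add_closure_sum add_closure_mult)
next
  show "add_closure (set A) \<subseteq> numsg A"
  proof
    fix x assume "x \<in> add_closure (set A)"
    then show "x \<in> numsg A"
    proof (induction rule: add_closure.induct)
      case zero
      show ?case unfolding numsg_def by (auto intro!: exI[of _ "replicate (length A) 0"])
    next
      case (add_gen s x)
      then obtain cs where cs: "length cs = length A" and x: "x = (\<Sum>i<length A. cs ! i * A ! i)"
        unfolding numsg_def by auto
      from add_gen(1) obtain t where t: "t < length A" "A ! t = s" by (auto simp: in_set_conv_nth)
      define cs' where "cs' = cs[t := Suc (cs ! t)]"
      have "(\<Sum>i<length A. cs' ! i * A ! i) = (\<Sum>i<length A. cs ! i * A ! i + (if i = t then A ! i else 0))"
        by (rule sum.cong) (auto simp: cs'_def cs nth_list_update)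
      also have "\<dots> = s + x"
        using t by (simp add: sum.distrib x)
      finally show ?case
        unfolding numsg_def using cs by (auto simp: cs'_def intro!: exI[of _ cs'])
    qed
  qed
qed

lemma Gcd_Un: "Gcd (A \<union> B) = gcd (Gcd A) (Gcd (B :: 'a :: semiring_Gcd set))"
  by (rule associated_eqI)
     (auto intro!: Gcd_greatest gcd_greatest intro: Gcd_dvd
       dvd_trans[OF gcd_dvd1] dvd_trans[OF gcd_dvd2])

lemma Gcd_image_div_nat:
  assumes "0 < (c :: nat)" and "\<And>s. s \<in> A \<Longrightarrow> c dvd s"
  shows "Gcd ((\<lambda>s. s div c) ` A) = Gcd A div c"
proof -
  have "A = (*) c ` ((\<lambda>s. s div c) ` A)"
    using assms(2) by (force simp: image_image)
  then have "Gcd A = c * Gcd ((\<lambda>s. s div c) ` A)"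
    using Gcd_mult[of c "(\<lambda>s. s div c) ` A"] by simp
  with assms(1) show ?thesis by simp
qed

lemma dseq_eq: "dseq G i = Gcd (set (take i G))"
  by (simp add: dseq_def pref_def)

lemma dseq_dvd_dseq: "i \<le> i' \<Longrightarrow> dseq G i' dvd dseq G i"
  unfolding dseq_eq by (meson Gcd_dvd Gcd_greatest set_take_subset_set_take subsetD)

lemma dseq_dvd_nth: "j < i \<Longrightarrow> j < length G \<Longrightarrow> dseq G i dvd G ! j"
  unfolding dseq_eq by (rule Gcd_dvd) (simp add: in_set_conv_nth exI[of _ j])

lemma dseq_pos: "0 < i \<Longrightarrow> 0 < G ! 0 \<Longrightarrow> G \<noteq> [] \<Longrightarrow> 0 < dseq G i"
  using dseq_dvd_nth[of 0 i G] by (auto intro: Nat.gr0I)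

lemma cseq_mult_dseq: "cseq G j * dseq G j = dseq G (j - 1)"
  unfolding cseq_def using dseq_dvd_dseq[of "j - 1" j G] by simp

lemma cseq_pos:
  assumes "2 \<le> j" and "0 < G ! 0" and "G \<noteq> []"
  shows "0 < cseq G j"
  using cseq_mult_dseq[of G j] dseq_pos[of "j - 1" G] assms by (auto intro: Nat.gr0I)

lemma cseq_dvd_nth: "j < n - 1 \<Longrightarrow> j < length G \<Longrightarrow> cseq G n dvd G ! j"
  using dseq_dvd_nth[of j "n - 1" G] cseq_mult_dseq[of G n] by (metis dvd_trans dvd_triv_left)

lemma dseq_eq_dseq_div_cseq: "0 < cseq G j \<Longrightarrow> dseq G (j - 1) div cseq G j = dseq G j"
  using cseq_mult_dseq[of G j] by (metis nonzero_mult_div_cancel_left not_gr0)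

lemma length_rho: "0 < n \<Longrightarrow> n \<le> length G \<Longrightarrow> length (rho n G) = length G - 1"
  by (simp add: rho_def)

lemma take_rho_le:
  "i \<le> n - 1 \<Longrightarrow> n \<le> length G \<Longrightarrow> take i (rho n G) = map (\<lambda>g. g div cseq G n) (take i G)"
  by (simp add: rho_def take_map min_def) arith

lemma take_rho_ge:
  "n - 1 \<le> i \<Longrightarrow> n \<le> length G \<Longrightarrow>
    take i (rho n G) = map (\<lambda>g. g div cseq G n) (take (n - 1) G) @ take (i - (n - 1)) (drop n G)"
  by (cases "n = 0") (simp_all add: rho_def take_map min_def)

lemma nth_rho_less: "i < n - 1 \<Longrightarrow> n \<le> length G \<Longrightarrow> rho n G ! i = G ! i div cseq G n"
  by (simp add: rho_def nth_append)

lemma nth_rho_ge: "n - 1 \<le> i \<Longrightarrow> 0 < n \<Longrightarrow> i < length G - 1 \<Longrightarrow> rho n G ! i = G ! Suc i"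
  by (simp add: rho_def nth_append)

lemma dseq_rho_le:
  assumes "i \<le> n - 1" and "n \<le> length G" and "0 < cseq G n"
  shows "dseq (rho n G) i = dseq G i div cseq G n"
proof -
  have "\<And>s. s \<in> set (take i G) \<Longrightarrow> cseq G n dvd s"
    using assms(1) by (auto simp: in_set_conv_nth intro!: cseq_dvd_nth)
  with assms show ?thesis
    by (simp add: dseq_eq take_rho_le Gcd_image_div_nat)
qed

lemma dseq_rho_ge:
  assumes "n - 1 \<le> i" and "0 < n" and "n \<le> length G" and "0 < cseq G n"
  shows "dseq (rho n G) i = dseq G (Suc i)"
proof -
  define U where "U = set (take (i - (n - 1)) (drop n G))"
  have "take (Suc i) G = take n G @ take (i - (n - 1)) (drop n G)"
    using assms(1,2) take_add[of n "i - (n - 1)" G] by simp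
  then have "dseq G (Suc i) = gcd (dseq G n) (Gcd U)"
    by (simp add: dseq_eq U_def Gcd_Un)
  moreover have "dseq (rho n G) i = gcd (dseq (rho n G) (n - 1)) (Gcd U)"
    using assms(1,3) by (simp add: dseq_eq take_rho_ge take_rho_le U_def Gcd_Un)
  moreover have "dseq (rho n G) (n - 1) = dseq G n"
    using assms(3,4) dseq_eq_dseq_div_cseq[of G n] by (simp add: dseq_rho_le)
  ultimately show ?thesis by simp
qed

lemma cseq_rho_le:
  assumes "j \<le> n - 1" and "n \<le> length G" and "0 < cseq G n"
  shows "cseq (rho n G) j = cseq G j"
proof -
  have "cseq G n dvd dseq G j"
    using cseq_mult_dseq[of G n] dseq_dvd_dseq[OF assms(1)] by (metis dvd_trans dvd_triv_left)
  moreover have "dseq G j dvd dseq G (j - 1)"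
    by (simp add: dseq_dvd_dseq)
  ultimately show ?thesis
    using assms by (simp add: cseq_def dseq_rho_le div_div_div_same)
qed

lemma cseq_rho_ge:
  assumes "n \<le> j" and "0 < n" and "n \<le> length G" and "0 < cseq G n"
  shows "cseq (rho n G) j = cseq G (Suc j)"
  using assms by (simp add: cseq_def dseq_rho_ge Suc_diff_1)

definition telescopic_at :: "nat list \<Rightarrow> nat \<Rightarrow> bool" where
  "telescopic_at G j \<longleftrightarrow> cseq G j * G ! (j - 1) \<in> add_closure (set (take (j - 1) G))"

lemma telescopic_iff_telescopic_at:
  "telescopic G \<longleftrightarrow> (\<forall>j. 2 \<le> j \<and> j \<le> length G \<longrightarrow> telescopic_at G j)"
  by (simp add: telescopic_def telescopic_at_def numsg_eq_add_closure pref_def)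

lemma telescopic_at_rho_le:
  assumes "telescopic_at G j" and "0 < j" and "j \<le> n - 1" and "n \<le> length G" and "0 < cseq G n"
  shows "telescopic_at (rho n G) j"
proof -
  let ?c = "cseq G n"
  have "\<And>s. s \<in> set (take (j - 1) G) \<Longrightarrow> ?c dvd s"
    using assms(3) by (auto simp: in_set_conv_nth intro!: cseq_dvd_nth)
  with assms(1) have "(cseq G j * G ! (j - 1)) div ?c
      \<in> add_closure ((\<lambda>s. s div ?c) ` set (take (j - 1) G))"
    unfolding telescopic_at_def by (rule add_closure_div)
  moreover have "?c dvd G ! (j - 1)"
    using assms(2-4) by (intro cseq_dvd_nth) auto
  ultimately show ?thesis
    using assms(2-5) by (simp add: telescopic_at_def cseq_rho_le nth_rho_less take_rho_le div_mult_swap)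
qed

lemma set_take_subset_add_closure_rho:
  assumes "telescopic_at G n" and "n \<le> j" and "0 < n" and "n \<le> length G" and "0 < cseq G n"
  shows "set (take j G) \<subseteq> add_closure (set (take (j - 1) (rho n G)))"
proof -
  let ?c = "cseq G n"
  let ?L = "set (take (n - 1) G)"
  define U where "U = set (take (j - n) (drop n G))"
  have gens: "set (take (j - 1) (rho n G)) = (\<lambda>s. s div ?c) ` ?L \<union> U"
    using assms(2-4) by (simp add: take_rho_ge U_def)
  have "take j G = take n G @ take (j - n) (drop n G)"
    using assms(2) take_add[of n "j - n" G] by simp
  moreover have "take n G = take (n - 1) G @ [G ! (n - 1)]"
    using assms(3,4) take_Suc_conv_app_nth[of "n - 1" G] by simp
  ultimately have "set (take j G) = insert (G ! (n - 1)) ?L \<union> U"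
    by (simp add: U_def)
  moreover have "s \<in> add_closure (set (take (j - 1) (rho n G)))" if "s \<in> ?L" for s
  proof -
    have "?c dvd s"
      using that by (auto simp: in_set_conv_nth intro!: cseq_dvd_nth)
    then have "s = ?c * (s div ?c)" by simp
    also have "\<dots> \<in> add_closure (set (take (j - 1) (rho n G)))"
      using that unfolding gens by (intro add_closure_mult) simp
    finally show ?thesis .
  qed
  moreover have "G ! (n - 1) \<in> add_closure (set (take (j - 1) (rho n G)))"
  proof -
    have "(?c * G ! (n - 1)) div ?c \<in> add_closure ((\<lambda>s. s div ?c) ` ?L)"
      using assms(1) unfolding telescopic_at_def
      by (rule add_closure_div) (auto simp: in_set_conv_nth intro!: cseq_dvd_nth)
    then show ?thesis
      using assms(5) add_closure_mono[OF Un_upper1] unfolding gens by auto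
  qed
  ultimately show ?thesis
    unfolding gens by (auto intro: add_closure_base)
qed

lemma telescopic_at_rho_ge:
  assumes "telescopic_at G n" and "telescopic_at G (Suc j)"
    and "n \<le> j" and "j < length G" and "0 < n" and "0 < cseq G n"
  shows "telescopic_at (rho n G) j"
proof -
  have "cseq G (Suc j) * G ! j \<in> add_closure (set (take (j - 1) (rho n G)))"
    using assms(2) set_take_subset_add_closure_rho[OF assms(1,3,5) _ assms(6)] assms(3,4)
    by (auto simp: telescopic_at_def intro: add_closure_subset)
  with assms(3-6) show ?thesis
    by (simp add: telescopic_at_def cseq_rho_ge nth_rho_ge)
qed

theorem mainTheorem11:
  fixes G :: "nat list" and n :: nat
  assumes "length G \<ge> 2" and "G ! 0 > 0" and "telescopic G"
    and "2 \<le> n" and "n \<le> length G"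
  shows "telescopic (rho n G)"
  unfolding telescopic_iff_telescopic_at
proof (intro allI impI)
  fix j assume j: "2 \<le> j \<and> j \<le> length (rho n G)"
  have c_pos: "0 < cseq G n"
    using assms by (intro cseq_pos) auto
  have G_tel: "telescopic_at G i" if "2 \<le> i" "i \<le> length G" for i
    using assms(3) that by (simp add: telescopic_iff_telescopic_at)
  show "telescopic_at (rho n G) j"
  proof (cases "j \<le> n - 1")
    case True
    with j assms c_pos show ?thesis
      by (intro telescopic_at_rho_le G_tel) auto
  next
    case False
    with j assms c_pos show ?thesis
      by (intro telescopic_at_rho_ge G_tel) (auto simp: length_rho)
  qed
qed

end
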